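(* Let $0<\epsilon<1$, $r>0$ be constants, $p_2=\frac{1-\epsilon}{n}$, $p_3=\frac{r}{n\ln n}$, and $K_0=\max\{1,\lambda_1^{-1}(10)\}=\max\{1,\tfrac{2(9+\epsilon)}{r}\}$. Then with probability tending to $1$ as $n\to\infty$, there is no vertex $v$ of $\mathbb{G}(n,p_2,p_3)$ whose propagation component satisfies $K_0\ln n\le |C_v|\le n-1$.
   Context: $\mathbb{G}(n,p_2,p_3)$ is the random hypergraph on a vertex set $V$ with $|V|=n$ in which each of the $\binom n2$ possible 2-element edges is present with probability $p_2$ and each of the $\binom n3$ possible 3-element hyperedges is present with probability $p_3$, all independently. Propagation process from a vertex $v$: one maintains a set $\mathcal{Y}_t$ of active vertices and a set $\mathcal{D}_t$ of inactive vertices, with $\mathcal{Y}_0=\{v\}$, $\mathcal{D}_0=\emptyset$; vertices in neither set are unexplored. At time $t=0,1,2,\dots$, while $\mathcal{Y}_t\neq\emptyset$, pick an active vertex $v_t\in\mathcal{Y}_t$ and let $U_t$ be the set of unexplored vertices $u$ such that $\{v_t,u\}$ is a 2-edge or $\{v_t,u,w\}$ is a 3-edge for some $w\in\mathcal{D}_t$; set $\mathcal{Y}_{t+1}=(\mathcal{Y}_t\cup U_t)\setminus\{v_t\}$ and $\mathcal{D}_{t+1}=\mathcal{D}_t\cup\{v_t\}$. The process stops at $T_v=\min\{t:\mathcal{Y}_t=\emptyset\}$, and the propagation component of $v$ is $C_v=\mathcal{D}_{T_v}$, so $|C_v|=T_v$. Here $\lambda_1(x)=1-\epsilon+\frac r2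 x$. *)

theory Defs
  imports "HOL-Probability.Probability"
begin

text \<open>Vertex set V = {0..<n}. A hypergraph is a pair (E2, E3) of sets of
2-element and 3-element subsets of V.\<close>

definition edges_of_size :: "nat \<Rightarrow> nat \<Rightarrow> nat set set" where
  "edges_of_size n k = {e. e \<subseteq> {..<n} \<and> card e = k}"

definition random_subset :: "'a set \<Rightarrow> real \<Rightarrow> 'a set pmf" where
  "random_subset A p = map_pmf (\<lambda>f. {e \<in> A. f e}) (Pi_pmf A False (\<lambda>_. bernoulli_pmf p))"

definition random_hypergraph :: "nat \<Rightarrow> real \<Rightarrow> real \<Rightarrow> (nat set set \<times> nat set set) pmf" where
  "random_hypergraph n p2 p3 =
     pair_pmf (random_subset (edges_of_size n 2) p2) (random_subset (edges_of_size n 3) p3)"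

text \<open>One step of the propagation process on state (Y_t, D_t); the active vertex
chosen is the least one (the final component does not depend on this choice).\<close>
definition prop_step :: "nat \<Rightarrow> nat set set \<times> nat set set \<Rightarrow> nat set \<times> nat set \<Rightarrow> nat set \<times> nat set" where
  "prop_step n H S =
     (let (Y, D) = S in
      if Y = {} then (Y, D) else
      let vt = Min Y;
          U = {u \<in> {..<n}. u \<notin> Y \<and> u \<notin> D \<and>
                 ({vt, u} \<in> fst H \<or> (\<exists>w\<in>D. {vt, u, w} \<in> snd H))}
      in ((Y \<union> U) - {vt}, D \<union> {vt}))"

definition prop_state :: "nat \<Rightarrow> nat set set \<times> nat set set \<Rightarrow> nat \<Rightarrow> nat \<Rightarrow> nat set \<times> nat set" where
  "prop_state n H v t = (prop_step n H ^^ t) ({v}, {})"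

definition stop_time :: "nat \<Rightarrow> nat set set \<times> nat set set \<Rightarrow> nat \<Rightarrow> nat" where
  "stop_time n H v = (LEAST t. fst (prop_state n H v t) = {})"

definition prop_component :: "nat \<Rightarrow> nat set set \<times> nat set set \<Rightarrow> nat \<Rightarrow> nat set" where
  "prop_component n H v = snd (prop_state n H v (stop_time n H v))"

definition lambda1 :: "real \<Rightarrow> real \<Rightarrow> real \<Rightarrow> real" where
  "lambda1 \<epsilon> r x = 1 - \<epsilon> + r / 2 * x"

end

theory Submission
  imports Defs "HOL-Real_Asymp.Real_Asymp"
begin

text \<open>If the propagation component \<open>C\<close> of \<open>v\<close> has \<open>k\<close> vertices, every vertex of \<open>C\<close>
  other than \<open>v\<close> was pulled in by a 2- or 3-edge inside \<open>C\<close>; these \<open>k - 1\<close> edges are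
  distinct, since each is determined by its vertex of latest entry. Moreover no 2-edge joins
  \<open>C\<close> to its complement and no 3-edge has exactly two vertices in \<open>C\<close>. A first-moment count
  over \<open>C\<close>, \<open>v\<close> and the choice of edges bounds the probability of a component of size \<open>k\<close>.
  For \<open>k \<ge> K\<^sub>0 ln n\<close> one has \<open>\<lambda>\<^sub>1(k / ln n) \<ge> 10\<close> and the bound is at most \<open>n^-2\<close>
  (for \<open>k > n/8\<close> the missing 3-edges alone suffice), so summing over \<open>k < n\<close> leaves \<open>1/n\<close>.\<close>

section \<open>The propagation process\<close>

definition newly_reached :: "nat \<Rightarrow> nat set set \<times> nat set set \<Rightarrow> nat set \<Rightarrow> nat set \<Rightarrow> nat set" where
  "newly_reached n H Y D = {u \<in> {..<n}. u \<notin> Y \<and> u \<notin> D \<and>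
     ({Min Y, u} \<in> fst H \<or> (\<exists>w\<in>D. {Min Y, u, w} \<in> snd H))}"

lemma prop_state_0: "prop_state n H v 0 = ({v}, {})"
  by (simp add: prop_state_def)

lemma prop_step_eq:
  "prop_step n H (Y, D) =
     (if Y = {} then (Y, D) else ((Y \<union> newly_reached n H Y D) - {Min Y}, D \<union> {Min Y}))"
  by (simp add: prop_step_def newly_reached_def Let_def)

text \<open>Pairs and triples that leave a vertex set \<open>C\<close>; a triple counts only if two of its
  vertices lie in \<open>C\<close>, as only such 3-edges can be used by the propagation.\<close>

definition boundary2 :: "nat \<Rightarrow> nat set \<Rightarrow> nat set set" where
  "boundary2 n C = (\<lambda>(x, u). {x, u}) ` (C \<times> ({..<n} - C))"

definition boundary3 :: "nat \<Rightarrow> nat set \<Rightarrow> nat set set" where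
  "boundary3 n C = (\<lambda>(s, u). insert u s) ` ({s. s \<subseteq> C \<and> card s = 2} \<times> ({..<n} - C))"

context
  fixes n :: nat and H :: "nat set set \<times> nat set set" and v :: nat
  assumes start_lt: "v < n"
begin

abbreviation active :: "nat \<Rightarrow> nat set" where "active t \<equiv> fst (prop_state n H v t)"
abbreviation inactive :: "nat \<Rightarrow> nat set" where "inactive t \<equiv> snd (prop_state n H v t)"
abbreviation reached :: "nat \<Rightarrow> nat set" where "reached t \<equiv> active t \<union> inactive t"
abbreviation component :: "nat set" where "component \<equiv> prop_component n H v"

lemma active_Suc:
    "active (Suc t) =
       (if active t = {} then {} else (active t \<union> newly_reached n H (active t) (inactive t)) - {Min (active t)})"
  and inactive_Suc:
    "inactive (Suc t) = (if active t = {} then inactive t else insert (Min (active t)) (inactive t))"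
  using prop_step_eq[of n H "active t" "inactive t"] by (simp_all add: prop_state_def)

lemma prop_state_invariant:
  "finite (active t) \<and> active t \<subseteq> {..<n} \<and> inactive t \<subseteq> {..<n} \<and> active t \<inter> inactive t = {}"
proof (induction t)
  case 0
  then show ?case using start_lt by (simp add: prop_state_0)
next
  case (Suc t)
  have "newly_reached n H (active t) (inactive t) \<subseteq> {..<n}"
    by (auto simp: newly_reached_def)
  moreover have "active t \<noteq> {} \<Longrightarrow> Min (active t) \<in> active t \<and> Min (active t) < n"
    using Suc by (meson Min_in lessThan_iff subsetD)
  ultimately show ?case
    using Suc unfolding active_Suc inactive_Suc by (auto simp: newly_reached_def intro: finite_subset)
qed

lemma Min_active_in: "active t \<noteq> {} \<Longrightarrow> Min (active t) \<in> active t"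
  using prop_state_invariant[of t] by auto

lemma card_inactive: "(\<forall>s<t. active s \<noteq> {}) \<Longrightarrow> card (inactive t) = t"
proof (induction t)
  case 0
  then show ?case by (simp add: prop_state_0)
next
  case (Suc t)
  then have "active t \<noteq> {}" by auto
  moreover from this have "Min (active t) \<notin> inactive t"
    using Min_active_in prop_state_invariant[of t] by blast
  moreover have "finite (inactive t)"
    using prop_state_invariant[of t] finite_subset by blast
  ultimately show ?case using Suc unfolding inactive_Suc by simp
qed

lemma active_stop_time: "active (stop_time n H v) = {}"
proof -
  have "\<exists>t. active t = {}"
  proof (rule ccontr)
    assume "\<nexists>t. active t = {}"
    then have "card (inactive (Suc n)) = Suc n" by (intro card_inactive) blast
    moreover have "card (inactive (Suc n)) \<le> n"
      using prop_state_invariant[of "Suc n"] by (metis card_lessThan card_mono finite_lessThan)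
    ultimately show False by simp
  qed
  then show ?thesis unfolding stop_time_def by (rule LeastI_ex)
qed

lemma prop_state_stable:
  "stop_time n H v \<le> s \<Longrightarrow> prop_state n H v s = prop_state n H v (stop_time n H v)"
proof (induction s rule: dec_induct)
  case (step s)
  obtain D where final: "prop_state n H v (stop_time n H v) = ({}, D)"
    using active_stop_time by (metis prod.collapse)
  have "prop_state n H v (Suc s) = prop_step n H (prop_state n H v s)"
    by (simp add: prop_state_def)
  also have "\<dots> = prop_state n H v (stop_time n H v)"
    using step.IH final by (simp add: prop_step_eq)
  finally show ?case .
qed simp

lemma reached_mono: "s \<le> t \<Longrightarrow> reached s \<subseteq> reached t \<and> inactive s \<subseteq> inactive t"
proof (induction t rule: dec_induct)
  case (step t)
  then show ?case using Min_active_in[of t] unfolding active_Suc inactive_Suc by auto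
qed simp

lemma reached_subset_component: "reached s \<subseteq> component"
proof (cases "s \<le> stop_time n H v")
  case True
  then show ?thesis
    using reached_mono[OF True] active_stop_time by (simp add: prop_component_def)
next
  case False
  then show ?thesis
    using prop_state_stable[of s] active_stop_time by (simp add: prop_component_def)
qed

lemma start_in_component: "v \<in> component"
  using reached_subset_component[of 0] by (simp add: prop_state_0)

lemma component_subset: "component \<subseteq> {..<n}"
  using prop_state_invariant[of "stop_time n H v"] by (simp add: prop_component_def)

lemma component_processed: "x \<in> component \<Longrightarrow> \<exists>s. active s \<noteq> {} \<and> x = Min (active s)"
proof -
  have "x \<in> inactive t \<Longrightarrow> \<exists>s. active s \<noteq> {} \<and> x = Min (active s)" for t
    by (induction t) (auto simp: prop_state_0 inactive_Suc split: if_splits)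
  then show "x \<in> component \<Longrightarrow> ?thesis" by (simp add: prop_component_def)
qed

lemma newly_reached_subset_component:
  "active s \<noteq> {} \<Longrightarrow> newly_reached n H (active s) (inactive s) \<subseteq> component"
  using reached_subset_component[of "Suc s"] unfolding active_Suc inactive_Suc
  by (auto simp: newly_reached_def)

lemma component_closed2: "fst H \<inter> boundary2 n component = {}"
proof -
  have "{x, u} \<notin> fst H" if x: "x \<in> component" and u: "u < n" "u \<notin> component" for x u
  proof
    assume edge: "{x, u} \<in> fst H"
    obtain s where s: "active s \<noteq> {}" "x = Min (active s)"
      using component_processed x by blast
    have "u \<notin> reached s" using reached_subset_component[of s] u by auto
    then have "u \<in> newly_reached n H (active s) (inactive s)"
      using edge s u by (auto simp: newly_reached_def)
    then show False using newly_reached_subset_component[OF s(1)] u by auto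
  qed
  then show ?thesis unfolding boundary2_def by auto
qed

text \<open>Of two processed vertices, the one processed first is already inactive when the
  other one is processed, so a 3-edge through both would pull in its third vertex.\<close>

lemma component_closed3_ordered:
  assumes a: "active sa \<noteq> {}" "a = Min (active sa)" and b: "active sb \<noteq> {}" "b = Min (active sb)"
    and "sa < sb" and u: "u < n" "u \<notin> component"
  shows "{a, b, u} \<notin> snd H"
proof
  assume edge: "{a, b, u} \<in> snd H"
  have "a \<in> inactive (Suc sa)" using a unfolding inactive_Suc by simp
  then have "a \<in> inactive sb" using reached_mono[of "Suc sa" sb] \<open>sa < sb\<close> by auto
  moreover have "u \<notin> reached sb" using reached_subset_component[of sb] u by auto
  moreover have "{b, u, a} \<in> snd H" using edge by (metis insert_commute)
  ultimately have "u \<in> newly_reached n H (active sb) (inactive sb)"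
    using b u by (auto simp: newly_reached_def)
  then show False using newly_reached_subset_component[OF b(1)] u by auto
qed

lemma component_closed3: "snd H \<inter> boundary3 n component = {}"
proof -
  have "{u, a, b} \<notin> snd H"
    if "a \<in> component" "b \<in> component" "a \<noteq> b" and u: "u < n" "u \<notin> component" for a b u
  proof -
    obtain sa where sa: "active sa \<noteq> {}" "a = Min (active sa)"
      using component_processed \<open>a \<in> component\<close> by blast
    obtain sb where sb: "active sb \<noteq> {}" "b = Min (active sb)"
      using component_processed \<open>b \<in> component\<close> by blast
    from \<open>a \<noteq> b\<close> consider "sa < sb" | "sb < sa" using sa sb by fastforce
    then show ?thesis
    proof cases
      case 1
      then show ?thesis using component_closed3_ordered[OF sa sb _ u] by (metis insert_commute)
    next
      case 2
      then show ?thesis using component_closed3_ordered[OF sb sa _ u] by (metis insert_commute)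
    qed
  qed
  note closed = this
  show ?thesis
  proof (rule ccontr)
    assume "snd H \<inter> boundary3 n component \<noteq> {}"
    then obtain s u where "insert u s \<in> snd H" "s \<subseteq> component" "card s = 2"
      and u: "u < n" "u \<notin> component"
      unfolding boundary3_def by auto
    moreover from \<open>card s = 2\<close> obtain a b where "s = {a, b}" "a \<noteq> b"
      by (meson card_2_iff)
    ultimately show False using closed u by auto
  qed
qed

definition entry_time :: "nat \<Rightarrow> nat" where
  "entry_time u = (LEAST t. u \<in> reached t)"

lemma entry_time_le: "u \<in> reached s \<Longrightarrow> entry_time u \<le> s"
  unfolding entry_time_def by (rule Least_le)

lemma entry_step:
  assumes "u \<in> component" "u \<noteq> v"
  obtains s where "entry_time u = Suc s" "active s \<noteq> {}"
    "u \<in> newly_reached n H (active s) (inactive s)"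
proof -
  have "u \<in> reached (stop_time n H v)" using assms(1) by (simp add: prop_component_def)
  then have entered: "u \<in> reached (entry_time u)"
    unfolding entry_time_def by (rule LeastI)
  moreover have "u \<notin> reached 0" using assms(2) by (simp add: prop_state_0)
  ultimately obtain s where s: "entry_time u = Suc s" "u \<in> reached (Suc s)"
    by (metis not0_implies_Suc)
  have "u \<notin> reached s" using entry_time_le[of u s] s(1) by auto
  moreover from this have "active s \<noteq> {}"
    using s(2) unfolding active_Suc inactive_Suc by (auto split: if_splits)
  ultimately have "u \<in> newly_reached n H (active s) (inactive s)"
    using s(2) Min_active_in[of s] unfolding active_Suc inactive_Suc by auto
  with s(1) \<open>active s \<noteq> {}\<close> show thesis by (rule that)
qed

lemma reaching_edge:
  assumes "u \<in> component" "u \<noteq> v"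
  shows "\<exists>e. u \<in> e \<and> e \<subseteq> component \<and> (card e = 2 \<and> e \<in> fst H \<or> card e = 3 \<and> e \<in> snd H)
           \<and> (\<forall>y\<in>e - {u}. entry_time y < entry_time u)"
proof -
  obtain s where s: "entry_time u = Suc s" "active s \<noteq> {}"
    and new: "u \<in> newly_reached n H (active s) (inactive s)"
    using entry_step[OF assms] by blast
  define m where "m = Min (active s)"
  have m: "m \<in> active s" using Min_active_in[OF s(2)] by (simp add: m_def)
  have early: "entry_time y < entry_time u" if "y \<in> reached s" for y
    using entry_time_le[OF that] s(1) by simp
  have sub: "reached s \<subseteq> component" by (rule reached_subset_component)
  have u_new: "u \<notin> reached s" using new by (simp add: newly_reached_def)
  from new consider "{m, u} \<in> fst H" | w where "w \<in> inactive s" "{m, u, w} \<in> snd H"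
    by (auto simp: newly_reached_def m_def)
  then show ?thesis
  proof cases
    case 1
    have "m \<noteq> u" using m u_new by auto
    then have "card {m, u} = 2" by simp
    then show ?thesis using 1 m sub assms(1) early by (intro exI[of _ "{m, u}"]) auto
  next
    case (2 w)
    have "m \<noteq> w" using m 2(1) prop_state_invariant[of s] by auto
    moreover have "m \<noteq> u" "u \<noteq> w" using m 2(1) u_new by auto
    ultimately have "card {m, u, w} = 3" by simp
    then show ?thesis using 2 m sub assms(1) early by (intro exI[of _ "{m, u, w}"]) auto
  qed
qed

text \<open>The chosen edges are distinct: \<open>u\<close> is the vertex of its edge with the largest entry
  time, so the edge determines \<open>u\<close>.\<close>

lemma component_reaching_edges:
  "\<exists>f. inj_on f (component - {v}) \<and> (\<forall>u\<in>component - {v}. u \<in> f u \<and> f u \<subseteq> component \<and>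
     (card (f u) = 2 \<and> f u \<in> fst H \<or> card (f u) = 3 \<and> f u \<in> snd H))"
proof -
  obtain f where f: "\<forall>u\<in>component - {v}. u \<in> f u \<and> f u \<subseteq> component
      \<and> (card (f u) = 2 \<and> f u \<in> fst H \<or> card (f u) = 3 \<and> f u \<in> snd H)
      \<and> (\<forall>y\<in>f u - {u}. entry_time y < entry_time u)"
    using reaching_edge by (metis Diff_iff singletonI)
  have "inj_on f (component - {v})"
  proof (rule inj_onI, rule ccontr)
    fix x y assume xy: "x \<in> component - {v}" "y \<in> component - {v}" "f x = f y" "x \<noteq> y"
    then have "entry_time y < entry_time x" "entry_time x < entry_time y"
      using f by (metis Diff_iff singletonD)+
    then show False by simp
  qed
  with f show ?thesis by blast
qed

end

section \<open>Edge patterns in the random hypergraph\<close>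

lemma measure_pair_pmf_Times:
  "measure_pmf.prob (pair_pmf M N) (A \<times> B) = measure_pmf.prob M A * measure_pmf.prob N B"
proof -
  have "measure_pmf.prob (pair_pmf M N) (A \<times> B)
      = measure_pmf.prob (pair_pmf M N) ((A \<inter> set_pmf M) \<times> (B \<inter> set_pmf N))"
    by (subst measure_Int_set_pmf[symmetric]) (simp add: Times_Int_Times)
  also have "\<dots> = measure_pmf.prob M (A \<inter> set_pmf M) * measure_pmf.prob N (B \<inter> set_pmf N)"
    by (intro measure_pmf_prob_product countable_Int2 countable_set_pmf)
  finally show ?thesis by (simp add: measure_Int_set_pmf)
qed

lemma prob_random_subset_pattern:
  assumes "finite A" "P \<subseteq> A" "N \<subseteq> A" "P \<inter> N = {}" "0 \<le> p" "p \<le> 1"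
  shows "measure_pmf.prob (random_subset A p) {S. P \<subseteq> S \<and> S \<inter> N = {}} = p ^ card P * (1 - p) ^ card N"
proof -
  define B where "B e = (if e \<in> P then {True} else if e \<in> N then {False} else UNIV)" for e
  have preimage: "(\<lambda>f. {e \<in> A. f e}) -` {S. P \<subseteq> S \<and> S \<inter> N = {}} = Pi A B"
    using assms(2-4) by (auto simp: B_def Pi_def split: if_splits)
  have prob_B: "measure_pmf.prob (bernoulli_pmf p) (B e)
      = (if e \<in> P then p else 1) * (if e \<in> N then 1 - p else 1)" for e
    using assms(4-6) by (auto simp: B_def measure_pmf_single measure_pmf.prob_space)
  have "measure_pmf.prob (random_subset A p) {S. P \<subseteq> S \<and> S \<inter> N = {}}
      = measure_pmf.prob (Pi_pmf A False (\<lambda>_. bernoulli_pmf p)) (Pi A B)"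
    unfolding random_subset_def measure_map_pmf preimage ..
  also have "\<dots> = (\<Prod>e\<in>A. measure_pmf.prob (bernoulli_pmf p) (B e))"
    by (rule measure_Pi_pmf_Pi[OF assms(1)])
  also have "\<dots> = (\<Prod>e\<in>A. if e \<in> P then p else 1) * (\<Prod>e\<in>A. if e \<in> N then 1 - p else 1)"
    unfolding prob_B by (rule prod.distrib)
  also have "\<dots> = p ^ card P * (1 - p) ^ card N"
    using assms(1-3) by (simp add: prod.If_cases Int_absorb1)
  finally show ?thesis .
qed

lemma finite_edges_of_size: "finite (edges_of_size n k)"
  unfolding edges_of_size_def by (rule finite_subset[of _ "Pow {..<n}"]) auto

lemma prob_random_hypergraph_pattern:
  assumes "P2 \<subseteq> edges_of_size n 2" "N2 \<subseteq> edges_of_size n 2" "P2 \<inter> N2 = {}"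
    and "P3 \<subseteq> edges_of_size n 3" "N3 \<subseteq> edges_of_size n 3" "P3 \<inter> N3 = {}"
    and "0 \<le> p2" "p2 \<le> 1" "0 \<le> p3" "p3 \<le> 1"
  shows "measure_pmf.prob (random_hypergraph n p2 p3)
      {H. P2 \<subseteq> fst H \<and> fst H \<inter> N2 = {} \<and> P3 \<subseteq> snd H \<and> snd H \<inter> N3 = {}}
    = p2 ^ card P2 * (1 - p2) ^ card N2 * (p3 ^ card P3 * (1 - p3) ^ card N3)"
proof -
  have "{H. P2 \<subseteq> fst H \<and> fst H \<inter> N2 = {} \<and> P3 \<subseteq> snd H \<and> snd H \<inter> N3 = {}}
      = {S. P2 \<subseteq> S \<and> S \<inter> N2 = {}} \<times> {S. P3 \<subseteq> S \<and> S \<inter> N3 = {}}"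
    by auto
  then show ?thesis
    using assms unfolding random_hypergraph_def
    by (simp add: measure_pair_pmf_Times prob_random_subset_pattern finite_edges_of_size)
qed

lemma card_boundary2:
  assumes "C \<subseteq> {..<n}"
  shows "card (boundary2 n C) = card C * (n - card C)"
proof -
  have "inj_on (\<lambda>(x, u). {x, u}) (C \<times> ({..<n} - C))"
    by (auto simp: inj_on_def doubleton_eq_iff)
  then have "card (boundary2 n C) = card (C \<times> ({..<n} - C))"
    unfolding boundary2_def by (rule card_image)
  moreover have "finite C" using assms finite_subset by blast
  ultimately show ?thesis
    using assms by (simp add: card_cartesian_product card_Diff_subset)
qed

lemma card_boundary3:
  assumes "C \<subseteq> {..<n}"
  shows "card (boundary3 n C) = (card C choose 2) * (n - card C)"
proof -
  have "inj_on (\<lambda>(s, u). insert u s) ({s. s \<subseteq> C \<and> card s = 2} \<times> ({..<n} - C))"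
  proof (rule inj_onI, clarify)
    fix s u s' u'
    assume "s \<subseteq> C" "u \<notin> C" "s' \<subseteq> C" "u' \<notin> C" and eq: "insert u s = insert u' s'"
    then have "u = u'" "u \<notin> s" "u' \<notin> s'" by blast+
    with eq show "s = s' \<and> u = u'" by (metis Diff_insert_absorb)
  qed
  then have "card (boundary3 n C) = card ({s. s \<subseteq> C \<and> card s = 2} \<times> ({..<n} - C))"
    unfolding boundary3_def by (rule card_image)
  moreover have "finite C" using assms finite_subset by blast
  ultimately show ?thesis
    using assms by (simp add: card_cartesian_product card_Diff_subset n_subsets)
qed

lemma boundary2_subset_edges: "C \<subseteq> {..<n} \<Longrightarrow> boundary2 n C \<subseteq> edges_of_size n 2"
  unfolding boundary2_def edges_of_size_def by (auto simp: card_insert_if)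

lemma boundary3_subset_edges: "C \<subseteq> {..<n} \<Longrightarrow> boundary3 n C \<subseteq> edges_of_size n 3"
  unfolding boundary3_def edges_of_size_def by (auto simp: card_insert_if card_2_iff)

definition edges_through :: "nat set \<Rightarrow> nat \<Rightarrow> nat set set" where
  "edges_through C u = {e. e \<subseteq> C \<and> u \<in> e \<and> (card e = 2 \<or> card e = 3)}"

definition edge_prob :: "real \<Rightarrow> real \<Rightarrow> nat set \<Rightarrow> real" where
  "edge_prob p2 p3 e = (if card e = 2 then p2 else p3)"

lemma edge_prob_nonneg: "0 \<le> p2 \<Longrightarrow> 0 \<le> p3 \<Longrightarrow> 0 \<le> edge_prob p2 p3 e"
  by (simp add: edge_prob_def)

lemma finite_edges_through: "finite C \<Longrightarrow> finite (edges_through C u)"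
  unfolding edges_through_def by (rule finite_subset[of _ "Pow C"]) auto

lemma sum_edge_prob_edges_through_le:
  fixes p2 p3 :: real
  assumes "finite C" "0 \<le> p2" "0 \<le> p3"
  shows "(\<Sum>e\<in>edges_through C u. edge_prob p2 p3 e) \<le> card C * p2 + real (card C) ^ 2 * p3"
proof -
  define E2 where "E2 = {e. e \<subseteq> C \<and> u \<in> e \<and> card e = 2}"
  define E3 where "E3 = {e. e \<subseteq> C \<and> u \<in> e \<and> card e = 3}"
  have "E2 \<subseteq> (\<lambda>x. {u, x}) ` C"
  proof
    fix e assume e: "e \<in> E2"
    then have "card (e - {u}) = 1" unfolding E2_def by auto
    then obtain x where "e - {u} = {x}" by (rule card_1_singletonE)
    then show "e \<in> (\<lambda>x. {u, x}) ` C" using e unfolding E2_def by auto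
  qed
  then have card2: "card E2 \<le> card C"
    using assms(1) card_image_le[of C "\<lambda>x. {u, x}"] by (meson card_mono finite_imageI le_trans)
  have "E3 \<subseteq> (\<lambda>(x, y). {u, x, y}) ` (C \<times> C)"
  proof
    fix e assume e: "e \<in> E3"
    then have "card (e - {u}) = 2" unfolding E3_def by auto
    then obtain x y where "e - {u} = {x, y}" by (meson card_2_iff)
    then show "e \<in> (\<lambda>(x, y). {u, x, y}) ` (C \<times> C)" using e unfolding E3_def by auto
  qed
  then have "card E3 \<le> card ((\<lambda>(x, y). {u, x, y}) ` (C \<times> C))"
    using assms(1) by (intro card_mono) auto
  also have "\<dots> \<le> card (C \<times> C)"
    using assms(1) by (intro card_image_le) simp
  finally have card3: "card E3 \<le> card C ^ 2"
    by (simp add: card_cartesian_product power2_eq_square)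
  have "edges_through C u = E2 \<union> E3" "E2 \<inter> E3 = {}"
    by (auto simp: edges_through_def E2_def E3_def)
  moreover have "finite E2" "finite E3"
    using assms(1) unfolding E2_def E3_def by (auto intro: finite_subset[of _ "Pow C"])
  ultimately have "(\<Sum>e\<in>edges_through C u. edge_prob p2 p3 e) = card E2 * p2 + card E3 * p3"
    by (simp add: sum.union_disjoint edge_prob_def E2_def E3_def)
  also have "\<dots> \<le> card C * p2 + real (card C) ^ 2 * p3"
    using card2 card3 assms by (intro add_mono mult_right_mono) (simp_all flip: of_nat_power)
  finally show ?thesis .
qed

definition spanning_assignments :: "nat set \<Rightarrow> nat \<Rightarrow> (nat \<Rightarrow> nat set) set" where
  "spanning_assignments C v = {f \<in> PiE (C - {v}) (edges_through C). inj_on f (C - {v})}"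

definition spanning_event :: "nat \<Rightarrow> nat set \<Rightarrow> nat \<Rightarrow> (nat \<Rightarrow> nat set) \<Rightarrow> (nat set set \<times> nat set set) set" where
  "spanning_event n C v f = {H.
     f ` {u \<in> C - {v}. card (f u) = 2} \<subseteq> fst H \<and> fst H \<inter> boundary2 n C = {} \<and>
     f ` {u \<in> C - {v}. card (f u) = 3} \<subseteq> snd H \<and> snd H \<inter> boundary3 n C = {}}"

lemma prob_spanning_event:
  fixes p2 p3 :: real
  assumes p: "0 \<le> p2" "p2 \<le> 1" "0 \<le> p3" "p3 \<le> 1"
    and C: "C \<subseteq> {..<n}" and f: "f \<in> spanning_assignments C v"
  shows "measure_pmf.prob (random_hypergraph n p2 p3) (spanning_event n C v f)
    = (\<Prod>u\<in>C - {v}. edge_prob p2 p3 (f u)) * ((1 - p2) ^ card (boundary2 n C) * (1 - p3) ^ card (boundary3 n C))"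
proof -
  define U2 where "U2 = {u \<in> C - {v}. card (f u) = 2}"
  define U3 where "U3 = {u \<in> C - {v}. card (f u) = 3}"
  have fu: "f u \<subseteq> C \<and> u \<in> f u \<and> (card (f u) = 2 \<or> card (f u) = 3)" if "u \<in> C - {v}" for u
    using f that unfolding spanning_assignments_def edges_through_def by (auto simp: PiE_iff)
  have inj: "inj_on f (C - {v})" using f unfolding spanning_assignments_def by auto
  have "finite C" using C finite_subset by blast
  have "(\<Prod>u\<in>C - {v}. edge_prob p2 p3 (f u)) = p2 ^ card U2 * p3 ^ card U3"
  proof -
    have "(C - {v}) \<inter> {u. card (f u) = 2} = U2" "(C - {v}) \<inter> - {u. card (f u) = 2} = U3"
      using fu by (auto simp: U2_def U3_def)
    then show ?thesis
      unfolding edge_prob_def using \<open>finite C\<close> by (simp add: prod.If_cases)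
  qed
  moreover have "card U2 = card (f ` U2)" "card U3 = card (f ` U3)"
    by (auto intro!: card_image[symmetric] inj_on_subset[OF inj] simp: U2_def U3_def)
  ultimately have edges: "(\<Prod>u\<in>C - {v}. edge_prob p2 p3 (f u)) = p2 ^ card (f ` U2) * p3 ^ card (f ` U3)"
    by simp
  have "f ` U2 \<subseteq> edges_of_size n 2" "f ` U3 \<subseteq> edges_of_size n 3"
    using fu C unfolding U2_def U3_def edges_of_size_def by fastforce+
  moreover have "f ` U2 \<inter> boundary2 n C = {}" "f ` U3 \<inter> boundary3 n C = {}"
    using fu unfolding U2_def U3_def boundary2_def boundary3_def by fastforce+
  ultimately have "measure_pmf.prob (random_hypergraph n p2 p3) (spanning_event n C v f)
      = p2 ^ card (f ` U2) * (1 - p2) ^ card (boundary2 n C) * (p3 ^ card (f ` U3) * (1 - p3) ^ card (boundary3 n C))"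
    unfolding spanning_event_def U2_def[symmetric] U3_def[symmetric]
    using boundary2_subset_edges[OF C] boundary3_subset_edges[OF C] p
    by (intro prob_random_hypergraph_pattern)
  then show ?thesis unfolding edges by (simp only: mult_ac)
qed

lemma sum_spanning_assignments_le:
  fixes p2 p3 :: real
  assumes "0 \<le> p2" "0 \<le> p3" "finite C" "v \<in> C"
  shows "(\<Sum>f\<in>spanning_assignments C v. \<Prod>u\<in>C - {v}. edge_prob p2 p3 (f u))
    \<le> (card C * p2 + real (card C) ^ 2 * p3) ^ (card C - 1)"
proof -
  have "finite (PiE (C - {v}) (edges_through C))"
    using assms(3) by (intro finite_PiE) (auto intro: finite_edges_through)
  then have "(\<Sum>f\<in>spanning_assignments C v. \<Prod>u\<in>C - {v}. edge_prob p2 p3 (f u))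
      \<le> (\<Sum>f\<in>PiE (C - {v}) (edges_through C). \<Prod>u\<in>C - {v}. edge_prob p2 p3 (f u))"
    by (rule sum_mono2) (auto simp: spanning_assignments_def intro!: prod_nonneg edge_prob_nonneg assms)
  also have "\<dots> = (\<Prod>u\<in>C - {v}. \<Sum>e\<in>edges_through C u. edge_prob p2 p3 e)"
    using assms(3) by (intro prod_sum_PiE[symmetric]) (auto intro: finite_edges_through)
  also have "\<dots> \<le> (\<Prod>u\<in>C - {v}. card C * p2 + real (card C) ^ 2 * p3)"
    using sum_edge_prob_edges_through_le[OF assms(3,1,2)]
    by (intro prod_mono) (auto intro!: sum_nonneg edge_prob_nonneg assms)
  also have "\<dots> = (card C * p2 + real (card C) ^ 2 * p3) ^ (card C - 1)"
    using assms(3,4) by simp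
  finally show ?thesis .
qed

lemma component_spanning_event:
  assumes "v < n"
  shows "\<exists>f\<in>spanning_assignments (prop_component n H v) v.
           H \<in> spanning_event n (prop_component n H v) v f"
proof -
  define C where "C = prop_component n H v"
  obtain f where f: "inj_on f (C - {v})" and fu: "\<forall>u\<in>C - {v}. u \<in> f u \<and> f u \<subseteq> C \<and>
      (card (f u) = 2 \<and> f u \<in> fst H \<or> card (f u) = 3 \<and> f u \<in> snd H)"
    using component_reaching_edges[OF assms, of H] unfolding C_def by blast
  have "restrict f (C - {v}) \<in> spanning_assignments C v"
    using f fu unfolding spanning_assignments_def edges_through_def by (auto simp: PiE_iff inj_on_def)
  moreover have "H \<in> spanning_event n C v (restrict f (C - {v}))"
    using fu component_closed2[OF assms, of H] component_closed3[OF assms, of H]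
    unfolding spanning_event_def C_def by force
  ultimately show ?thesis unfolding C_def by blast
qed

section \<open>The first-moment bound\<close>

text \<open>Union bound over the possible components of size \<open>k\<close>. For \<open>8 k \<le> n\<close> a component
  is witnessed by its reaching edges together with the absence of boundary edges; for larger
  \<open>k\<close> the absence of boundary 3-edges alone is already unlikely enough.\<close>

definition component_bound :: "nat \<Rightarrow> real \<Rightarrow> real \<Rightarrow> nat \<Rightarrow> real" where
  "component_bound n p2 p3 k =
     (if 8 * k \<le> n
      then real (n choose k) * (k * ((k * p2 + real k ^ 2 * p3) ^ (k - 1) *
             ((1 - p2) ^ (k * (n - k)) * (1 - p3) ^ ((k choose 2) * (n - k)))))
      else real (n choose k) * (1 - p3) ^ ((k choose 2) * (n - k)))"

lemma prob_spanned_set_le: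
  fixes p2 p3 :: real
  assumes p: "0 \<le> p2" "p2 \<le> 1" "0 \<le> p3" "p3 \<le> 1" and C: "C \<subseteq> {..<n}" "card C = k"
  shows "measure_pmf.prob (random_hypergraph n p2 p3)
      (\<Union>v\<in>C. \<Union>f\<in>spanning_assignments C v. spanning_event n C v f)
    \<le> k * ((k * p2 + real k ^ 2 * p3) ^ (k - 1) *
           ((1 - p2) ^ (k * (n - k)) * (1 - p3) ^ ((k choose 2) * (n - k))))"
proof -
  define M where "M = random_hypergraph n p2 p3"
  define Z where "Z = (1 - p2) ^ (k * (n - k)) * (1 - p3) ^ ((k choose 2) * (n - k))"
  have "finite C" using C finite_subset by blast
  have "Z \<ge> 0" using p unfolding Z_def by simp
  have per_start: "measure_pmf.prob M (\<Union>f\<in>spanning_assignments C v. spanning_event n C v f)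
      \<le> (k * p2 + real k ^ 2 * p3) ^ (k - 1) * Z" if "v \<in> C" for v
  proof -
    have "finite (PiE (C - {v}) (edges_through C))"
      using \<open>finite C\<close> by (intro finite_PiE) (auto intro: finite_edges_through)
    then have "finite (spanning_assignments C v)"
      unfolding spanning_assignments_def by (rule finite_subset[rotated]) auto
    then have "measure_pmf.prob M (\<Union>f\<in>spanning_assignments C v. spanning_event n C v f)
        \<le> (\<Sum>f\<in>spanning_assignments C v. measure_pmf.prob M (spanning_event n C v f))"
      by (rule measure_pmf.finite_measure_subadditive_finite) simp
    also have "\<dots> = (\<Sum>f\<in>spanning_assignments C v. \<Prod>u\<in>C - {v}. edge_prob p2 p3 (f u)) * Z"
      unfolding sum_distrib_right M_def
      by (intro sum.cong refl) (simp add: prob_spanning_event[OF p C(1)] card_boundary2 card_boundary3 C Z_def)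
    also have "\<dots> \<le> (k * p2 + real k ^ 2 * p3) ^ (k - 1) * Z"
      using sum_spanning_assignments_le[OF p(1,3) \<open>finite C\<close> that] \<open>Z \<ge> 0\<close> C(2)
      by (intro mult_right_mono) simp_all
    finally show ?thesis .
  qed
  have "measure_pmf.prob M (\<Union>v\<in>C. \<Union>f\<in>spanning_assignments C v. spanning_event n C v f)
      \<le> (\<Sum>v\<in>C. measure_pmf.prob M (\<Union>f\<in>spanning_assignments C v. spanning_event n C v f))"
    using \<open>finite C\<close> by (rule measure_pmf.finite_measure_subadditive_finite) simp
  also have "\<dots> \<le> (\<Sum>v\<in>C. (k * p2 + real k ^ 2 * p3) ^ (k - 1) * Z)"
    by (rule sum_mono) (rule per_start)
  also have "\<dots> = k * ((k * p2 + real k ^ 2 * p3) ^ (k - 1) * Z)"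
    using C(2) by simp
  finally show ?thesis unfolding M_def Z_def .
qed

lemma prob_closed3:
  fixes p2 p3 :: real
  assumes p: "0 \<le> p2" "p2 \<le> 1" "0 \<le> p3" "p3 \<le> 1" and C: "C \<subseteq> {..<n}"
  shows "measure_pmf.prob (random_hypergraph n p2 p3) {H. snd H \<inter> boundary3 n C = {}}
    = (1 - p3) ^ ((card C choose 2) * (n - card C))"
proof -
  have "{H. snd H \<inter> boundary3 n C = {}}
      = {H. {} \<subseteq> fst H \<and> fst H \<inter> {} = {} \<and> {} \<subseteq> snd H \<and> snd H \<inter> boundary3 n C = {}}"
    by auto
  then show ?thesis
    using prob_random_hypergraph_pattern[of "{}" n "{}" "{}" "boundary3 n C" p2 p3]
      boundary3_subset_edges[OF C] p
    by (simp add: card_boundary3[OF C])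
qed

lemma prob_component_of_size_le:
  fixes p2 p3 :: real
  assumes p: "0 \<le> p2" "p2 \<le> 1" "0 \<le> p3" "p3 \<le> 1"
  shows "measure_pmf.prob (random_hypergraph n p2 p3) {H. \<exists>v<n. card (prop_component n H v) = k}
    \<le> component_bound n p2 p3 k"
proof -
  define M where "M = random_hypergraph n p2 p3"
  define Sets where "Sets = {C. C \<subseteq> {..<n} \<and> card C = k}"
  have "finite Sets" unfolding Sets_def by (rule finite_subset[of _ "Pow {..<n}"]) auto
  have card_Sets: "card Sets = n choose k"
    unfolding Sets_def using n_subsets[of "{..<n}" k] by simp
  have component_in_Sets: "prop_component n H v \<in> Sets" if "v < n" "card (prop_component n H v) = k" for H v
    using component_subset[OF that(1)] that(2) by (simp add: Sets_def)
  show ?thesis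
  proof (cases "8 * k \<le> n")
    case True
    have "{H. \<exists>v<n. card (prop_component n H v) = k}
        \<subseteq> (\<Union>C\<in>Sets. \<Union>v\<in>C. \<Union>f\<in>spanning_assignments C v. spanning_event n C v f)"
    proof
      fix H assume "H \<in> {H. \<exists>v<n. card (prop_component n H v) = k}"
      then obtain v where v: "v < n" "card (prop_component n H v) = k" by blast
      obtain f where "f \<in> spanning_assignments (prop_component n H v) v"
        "H \<in> spanning_event n (prop_component n H v) v f"
        using component_spanning_event[OF v(1)] by blast
      then show "H \<in> (\<Union>C\<in>Sets. \<Union>v\<in>C. \<Union>f\<in>spanning_assignments C v. spanning_event n C v f)"
        using component_in_Sets[OF v] start_in_component[OF v(1)] by blast
    qed
    then have "measure_pmf.prob M {H. \<exists>v<n. card (prop_component n H v) = k}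
        \<le> measure_pmf.prob M (\<Union>C\<in>Sets. \<Union>v\<in>C. \<Union>f\<in>spanning_assignments C v. spanning_event n C v f)"
      by (intro measure_pmf.finite_measure_mono) simp_all
    also have "\<dots> \<le> (\<Sum>C\<in>Sets. measure_pmf.prob M (\<Union>v\<in>C. \<Union>f\<in>spanning_assignments C v. spanning_event n C v f))"
      using \<open>finite Sets\<close> by (rule measure_pmf.finite_measure_subadditive_finite) simp
    also have "\<dots> \<le> (\<Sum>C\<in>Sets. k * ((k * p2 + real k ^ 2 * p3) ^ (k - 1) *
           ((1 - p2) ^ (k * (n - k)) * (1 - p3) ^ ((k choose 2) * (n - k)))))"
      unfolding M_def by (intro sum_mono prob_spanned_set_le[OF p]) (auto simp: Sets_def)
    also have "\<dots> = component_bound n p2 p3 k"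
      using True by (simp add: card_Sets component_bound_def)
    finally show ?thesis unfolding M_def .
  next
    case False
    have "{H. \<exists>v<n. card (prop_component n H v) = k} \<subseteq> (\<Union>C\<in>Sets. {H. snd H \<inter> boundary3 n C = {}})"
      using component_in_Sets component_closed3 by fast
    then have "measure_pmf.prob M {H. \<exists>v<n. card (prop_component n H v) = k}
        \<le> measure_pmf.prob M (\<Union>C\<in>Sets. {H. snd H \<inter> boundary3 n C = {}})"
      by (intro measure_pmf.finite_measure_mono) simp_all
    also have "\<dots> \<le> (\<Sum>C\<in>Sets. measure_pmf.prob M {H. snd H \<inter> boundary3 n C = {}})"
      using \<open>finite Sets\<close> by (rule measure_pmf.finite_measure_subadditive_finite) simp
    also have "\<dots> = (\<Sum>C\<in>Sets. (1 - p3) ^ ((k choose 2) * (n - k)))"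
      unfolding M_def by (intro sum.cong refl) (auto simp: Sets_def prob_closed3[OF p])
    also have "\<dots> = component_bound n p2 p3 k"
      using False by (simp add: card_Sets component_bound_def)
    finally show ?thesis unfolding M_def .
  qed
qed

lemma prob_component_size_between_le:
  fixes p2 p3 a :: real
  assumes "0 \<le> p2" "p2 \<le> 1" "0 \<le> p3" "p3 \<le> 1"
  shows "measure_pmf.prob (random_hypergraph n p2 p3)
      {H. \<exists>v<n. a \<le> real (card (prop_component n H v)) \<and> card (prop_component n H v) \<le> n - 1}
    \<le> (\<Sum>k | k < n \<and> a \<le> real k. component_bound n p2 p3 k)"
proof -
  define M where "M = random_hypergraph n p2 p3"
  define Ks where "Ks = {k. k < n \<and> a \<le> real k}"
  have "finite Ks" unfolding Ks_def by simp
  have "{H. \<exists>v<n. a \<le> real (card (prop_component n H v)) \<and> card (prop_component n H v) \<le> n - 1}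
      \<subseteq> (\<Union>k\<in>Ks. {H. \<exists>v<n. card (prop_component n H v) = k})"
  proof
    fix H assume "H \<in> {H. \<exists>v<n. a \<le> real (card (prop_component n H v)) \<and> card (prop_component n H v) \<le> n - 1}"
    then obtain v where "v < n" "a \<le> real (card (prop_component n H v))" "card (prop_component n H v) \<le> n - 1"
      by blast
    then show "H \<in> (\<Union>k\<in>Ks. {H. \<exists>v<n. card (prop_component n H v) = k})"
      unfolding Ks_def by (intro UN_I[of "card (prop_component n H v)"]) auto
  qed
  then have "measure_pmf.prob M {H. \<exists>v<n. a \<le> real (card (prop_component n H v)) \<and> card (prop_component n H v) \<le> n - 1}
      \<le> measure_pmf.prob M (\<Union>k\<in>Ks. {H. \<exists>v<n. card (prop_component n H v) = k})"
    by (intro measure_pmf.finite_measure_mono) simp_all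
  also have "\<dots> \<le> (\<Sum>k\<in>Ks. measure_pmf.prob M {H. \<exists>v<n. card (prop_component n H v) = k})"
    using \<open>finite Ks\<close> by (rule measure_pmf.finite_measure_subadditive_finite) simp
  also have "\<dots> \<le> (\<Sum>k\<in>Ks. component_bound n p2 p3 k)"
    unfolding M_def by (intro sum_mono prob_component_of_size_le assms)
  finally show ?thesis unfolding M_def Ks_def .
qed

section \<open>Analytic estimates\<close>

lemma pow_div_fact_le_exp:
  fixes x :: real
  assumes "0 \<le> x"
  shows "x ^ k / fact k \<le> exp x"
proof -
  have series: "(\<lambda>j. x ^ j / fact j) sums exp x"
    using exp_converges[of x] by (simp add: divide_inverse mult.commute)
  have "(\<Sum>j\<in>{k}. x ^ j / fact j) \<le> (\<Sum>j. x ^ j / fact j)"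
    using series assms by (intro sum_le_suminf) (auto simp: sums_iff)
  then show ?thesis using series by (simp add: sums_iff)
qed

lemma one_minus_pow_le_exp:
  fixes p :: real
  assumes "0 \<le> p" "p \<le> 1"
  shows "(1 - p) ^ m \<le> exp (- (p * real m))"
proof -
  have "(1 - p) ^ m \<le> exp (- p) ^ m"
    using exp_ge_add_one_self[of "- p"] assms by (intro power_mono) auto
  also have "\<dots> = exp (- (p * real m))"
    by (simp flip: exp_of_nat_mult add: mult.commute)
  finally show ?thesis .
qed

lemma of_nat_choose_two: "real (k choose 2) = real k * (real k - 1) / 2"
proof -
  have "2 dvd k * (k - 1)" by (cases "even k") auto
  then have "real (k choose 2) = real (k * (k - 1)) / 2"
    by (simp add: choose_two real_of_nat_div)
  then show ?thesis by (cases k) (auto simp: algebra_simps)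
qed

lemma binomial_le_pow_div_fact: "real (n choose k) \<le> real n ^ k / fact k"
proof -
  have "real ((n choose k) * fact k) \<le> real (n ^ k)"
    by (rule of_nat_mono) (rule binomial_fact_pow)
  then show ?thesis by (simp add: field_simps)
qed

lemma exp_neg_mult_ln:
  fixes x :: real
  assumes "0 < x"
  shows "exp (- (real m * ln x)) = 1 / x ^ m"
  using assms by (simp add: exp_minus exp_of_nat_mult divide_inverse)

lemma per_vertex_factor_le:
  fixes l y :: real
  assumes "10 \<le> l" "0 \<le> y" "y \<le> 1 / 4"
  shows "exp 1 * (2 * l) * exp (- (7 / 8) * l) * exp y \<le> exp (- 3)"
proof -
  have "l \<le> 4 * exp (l / 4 - 1)"
    using exp_ge_add_one_self[of "l / 4 - 1"] by simp
  then have "exp 1 * (2 * l) * exp (- (7 / 8) * l) * exp y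
      \<le> exp 1 * (2 * (4 * exp (l / 4 - 1))) * exp (- (7 / 8) * l) * exp y"
    using assms by (intro mult_right_mono mult_left_mono) auto
  also have "\<dots> = 8 * exp (1 + (l / 4 - 1) + (- (7 / 8) * l) + y)"
    by (simp only: exp_add)
  also have "\<dots> \<le> 8 * exp (- 6)"
    using assms by (intro mult_left_mono) auto
  also have "\<dots> \<le> exp 3 * exp (- 6)"
  proof -
    have "(2 :: real) ^ 3 \<le> exp 1 ^ 3"
      using exp_ge_add_one_self[of 1] by (intro power_mono) auto
    then show ?thesis by (simp flip: exp_of_nat_mult)
  qed
  also have "\<dots> = exp (- 3)"
    by (simp flip: exp_add)
  finally show ?thesis .
qed

text \<open>The exponent \<open>p\<^sub>2 k (n - k) + p\<^sub>3 binom k 2 (n - k)\<close> equals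
  \<open>k (1 - k/n) (\<lambda>\<^sub>1(k/L) - r/(2L))\<close>, and \<open>1 - k/n \<ge> 7/8\<close>.\<close>

lemma no_boundary_edges_prob_le:
  fixes e r L :: real and n k :: nat
  assumes e: "0 < e" "e < 1" and r: "0 < r" and L: "0 < L" "r \<le> real n * L"
    and k: "1 \<le> k" "8 * k \<le> n" and lam: "0 \<le> lambda1 e r (real k / L)"
  shows "(1 - (1 - e) / real n) ^ (k * (n - k)) * (1 - r / (real n * L)) ^ ((k choose 2) * (n - k))
    \<le> exp (- (real k * ((7 / 8) * lambda1 e r (real k / L) - r / (2 * L))))"
proof -
  define x where "x = real k"
  define nn where "nn = real n"
  define lam where "lam = lambda1 e r (x / L)"
  define y where "y = r / (2 * L)"
  define t where "t = (nn - x) / nn"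
  have nn: "0 < nn" "8 * x \<le> nn" using k unfolding x_def nn_def by auto
  have x: "1 \<le> x" using k unfolding x_def by simp
  have y: "0 \<le> y" using r L unfolding y_def by simp
  have p2: "0 \<le> (1 - e) / nn" "(1 - e) / nn \<le> 1" using e nn x by (auto simp: field_simps)
  have p3: "0 \<le> r / (nn * L)" "r / (nn * L) \<le> 1" using r L nn by (auto simp: field_simps nn_def)
  have lam_y: "lam - y = (1 - e) + r * (x - 1) / (2 * L)"
    unfolding lam_def y_def lambda1_def using L by (simp add: field_simps)
  have counts: "real (k * (n - k)) = x * (nn - x)" "real ((k choose 2) * (n - k)) = x * (x - 1) / 2 * (nn - x)"
    using k unfolding x_def nn_def by (simp_all add: of_nat_diff of_nat_choose_two)
  have exponent: "(1 - e) / nn * real (k * (n - k)) + r / (nn * L) * real ((k choose 2) * (n - k))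
      = x * t * (lam - y)"
    unfolding counts lam_y t_def using nn L by (simp add: field_simps)
  have "7 / 8 \<le> t" using nn x unfolding t_def by (simp add: field_simps)
  moreover have "0 \<le> lam - y" unfolding lam_y using e r L x by simp
  ultimately have "(7 / 8) * (lam - y) \<le> t * (lam - y)" by (rule mult_right_mono)
  moreover have "(7 / 8) * lam - y \<le> (7 / 8) * (lam - y)" using y by simp
  ultimately have "(7 / 8) * lam - y \<le> t * (lam - y)" by linarith
  then have bound: "x * ((7 / 8) * lam - y) \<le> x * t * (lam - y)"
    using x mult_left_mono[of "(7 / 8) * lam - y" "t * (lam - y)" x] by (simp add: mult.assoc)
  have "(1 - (1 - e) / nn) ^ (k * (n - k)) * (1 - r / (nn * L)) ^ ((k choose 2) * (n - k))
      \<le> exp (- ((1 - e) / nn * real (k * (n - k)))) * exp (- (r / (nn * L) * real ((k choose 2) * (n - k))))"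
    using p2 p3 by (intro mult_mono one_minus_pow_le_exp) auto
  also have "\<dots> = exp (- (x * t * (lam - y)))"
    unfolding exponent[symmetric] by (simp flip: exp_add)
  also have "\<dots> \<le> exp (- (x * ((7 / 8) * lam - y)))"
    using bound by simp
  finally show ?thesis unfolding x_def nn_def lam_def y_def .
qed

text \<open>With \<open>\<lambda> = \<lambda>\<^sub>1(k/L) \<ge> 10\<close> and \<open>y = r/(2L)\<close>: the reaching edges cost at most
  \<open>(2\<lambda>k/n)^(k-1)\<close>, the missing boundary edges \<open>exp(-k(7\<lambda>/8 - y))\<close>, and
  \<open>binom n k \<le> n^k/k!\<close>, \<open>k^k/k! \<le> e^k\<close>; so each vertex contributes a factor \<open>e^-3\<close>,
  and \<open>k \<ge> ln n\<close> turns \<open>n e^(-3k)\<close> into \<open>n^-2\<close>.\<close>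

lemma component_bound_small:
  fixes e r :: real and n k :: nat
  defines "L \<equiv> ln (real n)"
  assumes e: "0 < e" "e < 1" and r: "0 < r" and L: "1 \<le> L" "2 * r \<le> L"
    and k: "8 * k \<le> n" "L \<le> real k" and lam: "10 \<le> lambda1 e r (real k / L)"
  shows "component_bound n ((1 - e) / real n) (r / (real n * L)) k \<le> 1 / real n ^ 2"
proof -
  define x where "x = real k"
  define nn where "nn = real n"
  define lam where "lam = lambda1 e r (x / L)"
  define y where "y = r / (2 * L)"
  define Z where "Z = (1 - (1 - e) / nn) ^ (k * (n - k)) * (1 - r / (nn * L)) ^ ((k choose 2) * (n - k))"
  define E where "E = exp (- (x * ((7 / 8) * lam - y)))"
  have "1 \<le> k" using k L unfolding x_def by simp
  then obtain j where j: "k = Suc j" using not0_implies_Suc by fastforce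
  have x: "1 \<le> x" using \<open>1 \<le> k\<close> unfolding x_def by simp
  have nn: "0 < nn" "8 * x \<le> nn" using k \<open>1 \<le> k\<close> unfolding x_def nn_def by auto
  have lam10: "10 \<le> lam" using lam unfolding lam_def x_def .
  have y: "0 \<le> y" "y \<le> 1 / 4" using r L unfolding y_def by (auto simp: field_simps)
  have "L \<le> nn * L" using mult_right_mono[of 1 nn L] nn x L by simp
  then have "r \<le> nn * L" using r L by linarith
  then have "Z \<le> E"
    using no_boundary_edges_prob_le[OF e r _ _ \<open>1 \<le> k\<close> k(1)] L lam10
    unfolding Z_def E_def x_def nn_def lam_def y_def by simp
  have "(1 - e) / nn \<le> 1" using e nn x by (simp add: field_simps)
  then have "Z \<ge> 0" using \<open>r \<le> nn * L\<close> nn L unfolding Z_def by (simp add: field_simps)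
  have "E \<ge> 0" unfolding E_def by simp
  have density: "x * ((1 - e) / nn) + x ^ 2 * (r / (nn * L)) \<le> 2 * lam * x / nn"
  proof -
    have "x * ((1 - e) / nn) + x ^ 2 * (r / (nn * L)) = x / nn * ((1 - e) + r * x / L)"
      using nn L by (simp add: field_simps power2_eq_square)
    also have "\<dots> \<le> x / nn * (2 * (1 - e) + r * x / L)"
      using e x nn by (intro mult_left_mono) auto
    also have "\<dots> = 2 * lam * x / nn"
      unfolding lam_def lambda1_def using L nn by (simp add: field_simps)
    finally show ?thesis .
  qed
  have "0 \<le> x * ((1 - e) / nn) + x ^ 2 * (r / (nn * L))"
    using e r L nn x by simp
  have "component_bound n ((1 - e) / nn) (r / (nn * L)) k
      = real (n choose k) * (x * ((x * ((1 - e) / nn) + x ^ 2 * (r / (nn * L))) ^ j * Z))"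
    unfolding component_bound_def Z_def x_def nn_def using k(1) j by simp
  also have "\<dots> \<le> (nn ^ k / fact k) * (x * ((2 * lam * x / nn) ^ j * E))"
    using binomial_le_pow_div_fact[of n k] density \<open>Z \<le> E\<close> \<open>Z \<ge> 0\<close> x
      \<open>0 \<le> x * ((1 - e) / nn) + x ^ 2 * (r / (nn * L))\<close>
    unfolding nn_def by (intro mult_mono power_mono) auto
  also have "\<dots> = nn * (x ^ k / fact k) * (2 * lam) ^ j * E"
  proof -
    have "(2 * lam * x / nn) ^ j = (2 * lam) ^ j * x ^ j / nn ^ j"
      by (simp add: power_mult_distrib power_divide)
    moreover have "nn ^ k = nn * nn ^ j" "x ^ k = x * x ^ j" using j by simp_all
    moreover have "nn ^ j \<noteq> 0" using nn by simp
    ultimately show ?thesis by (simp add: field_simps)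
  qed
  also have "\<dots> \<le> nn * exp x * (2 * lam) ^ k * E"
    using nn lam10 x \<open>E \<ge> 0\<close> pow_div_fact_le_exp[of x k] j
    by (intro mult_mono power_increasing) auto
  also have "\<dots> = nn * (exp 1 * (2 * lam) * exp (- (7 / 8) * lam) * exp y) ^ k"
    unfolding E_def x_def
    by (simp add: power_mult_distrib algebra_simps flip: exp_of_nat_mult exp_add)
  also have "\<dots> \<le> nn * exp (- 3) ^ k"
    using per_vertex_factor_le[OF lam10 y] nn lam10 by (intro mult_left_mono power_mono) auto
  also have "\<dots> \<le> nn * exp (- (3 * L))"
    using k(2) nn by (simp flip: exp_of_nat_mult add: x_def)
  also have "\<dots> = 1 / nn ^ 2"
    using exp_neg_mult_ln[of nn 3] nn unfolding L_def nn_def by (simp add: power2_eq_square power3_eq_cube)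
  finally show ?thesis unfolding nn_def .
qed

lemma component_bound_large:
  fixes p2 r :: real and n k :: nat
  defines "L \<equiv> ln (real n)"
  assumes r: "0 < r" "r \<le> real n * L" and L: "1 \<le> L" and n: "16 \<le> n" "768 * L ^ 2 \<le> r * real n"
    and k: "n < 8 * k" "k < n"
  shows "component_bound n p2 (r / (real n * L)) k \<le> 1 / real n ^ 2"
proof -
  define nn where "nn = real n"
  define x where "x = real k"
  define p where "p = r / (nn * L)"
  have nn: "16 \<le> nn" "nn < 8 * x" using n k unfolding nn_def x_def by auto
  have p: "0 \<le> p" "p \<le> 1" using r L nn unfolding p_def nn_def by (auto simp: field_simps)
  have "real (n choose k) \<le> nn ^ (n - k)"
  proof -
    have "n choose k = n choose (n - k)" using k by (intro binomial_symmetric) simp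
    also have "\<dots> \<le> n ^ (n - k)" by (rule binomial_le_pow) simp
    finally show ?thesis unfolding nn_def by (simp flip: of_nat_power)
  qed
  have "3 * L \<le> p * real (k choose 2)"
  proof -
    have "nn * nn \<le> 64 * (x * x)"
      using nn mult_mono[of nn "8 * x" nn "8 * x"] by simp
    moreover have "2 * x \<le> x * x"
      using nn mult_right_mono[of 2 x x] by simp
    ultimately have "nn * nn / 256 \<le> x * (x - 1) / 2"
      by (simp add: right_diff_distrib)
    then have "p * (nn * nn / 256) \<le> p * (x * (x - 1) / 2)"
      using p(1) by (rule mult_left_mono)
    moreover have "3 * L \<le> p * (nn * nn / 256)"
      using n(2) nn L unfolding p_def nn_def by (simp add: field_simps power2_eq_square)
    ultimately show ?thesis unfolding x_def of_nat_choose_two by linarith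
  qed
  then have "3 * L * real (n - k) \<le> p * real ((k choose 2) * (n - k))"
    using mult_right_mono[of "3 * L" "p * real (k choose 2)" "real (n - k)"] by (simp add: mult.assoc)
  then have "(1 - p) ^ ((k choose 2) * (n - k)) \<le> exp (- (3 * L * real (n - k)))"
    using one_minus_pow_le_exp[OF p, of "(k choose 2) * (n - k)"]
    by (meson exp_le_cancel_iff neg_le_iff_le order_trans)
  also have "\<dots> = exp (- (3 * ln nn)) ^ (n - k)"
    unfolding L_def nn_def by (simp flip: exp_of_nat_mult add: algebra_simps)
  also have "\<dots> = (1 / nn ^ 3) ^ (n - k)"
    using exp_neg_mult_ln[of nn 3] nn by simp
  finally have "component_bound n p2 p k \<le> nn ^ (n - k) * (1 / nn ^ 3) ^ (n - k)"
    unfolding component_bound_def using k \<open>real (n choose k) \<le> nn ^ (n - k)\<close> p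
    by (simp add: mult_mono)
  also have "\<dots> = (1 / nn ^ 2) ^ (n - k)"
    using nn by (simp flip: power_mult_distrib add: power2_eq_square power3_eq_cube)
  also have "\<dots> \<le> 1 / nn ^ 2"
    using k nn by (intro power_decreasing[of 1, simplified]) (auto simp: field_simps)
  finally show ?thesis unfolding p_def nn_def .
qed

section \<open>Asymptotics\<close>

lemma component_bound_le_inverse_square:
  fixes e r K :: real and n k :: nat
  defines "L \<equiv> ln (real n)"
  assumes e: "0 < e" "e < 1" and r: "0 < r" and K: "1 \<le> K" "2 * (9 + e) / r \<le> K"
    and n: "16 \<le> n" "1 \<le> L" "2 * r \<le> L" "768 * L ^ 2 \<le> r * real n"
    and k: "k < n" "K * L \<le> real k"
  shows "component_bound n ((1 - e) / real n) (r / (real n * L)) k \<le> 1 / real n ^ 2"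
proof (cases "8 * k \<le> n")
  case True
  have "L \<le> real k" using K(1) k(2) n(2) mult_right_mono[of 1 K L] by linarith
  have "9 + e \<le> r / 2 * K" using K(2) r by (simp add: field_simps)
  also have "\<dots> \<le> r / 2 * (real k / L)"
    using k(2) r n(2) by (intro mult_left_mono) (simp_all add: field_simps)
  finally have "10 \<le> lambda1 e r (real k / L)" unfolding lambda1_def by simp
  with True show ?thesis
    using e r n \<open>L \<le> real k\<close> unfolding L_def by (intro component_bound_small) simp_all
next
  case False
  have "L \<le> real n * L" using mult_right_mono[of 1 "real n" L] n(1,2) by simp
  then have "r \<le> real n * L" using n(3) r by linarith
  with False show ?thesis
    using r n k unfolding L_def by (intro component_bound_large) simp_all
qed

lemma eventually_prob_large_proper_component_le:
  fixes e r K :: real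
  assumes e: "0 < e" "e < 1" and r: "0 < r" and K: "1 \<le> K" "2 * (9 + e) / r \<le> K"
  shows "\<forall>\<^sub>F n in sequentially.
    measure_pmf.prob (random_hypergraph n ((1 - e) / real n) (r / (real n * ln (real n))))
      {H. \<exists>v<n. K * ln (real n) \<le> real (card (prop_component n H v)) \<and> card (prop_component n H v) \<le> n - 1}
    \<le> 1 / real n"
proof -
  have "\<forall>\<^sub>F n in sequentially. 16 \<le> n" by (rule eventually_ge_at_top)
  moreover have "\<forall>\<^sub>F n in sequentially. max 1 (2 * r) \<le> ln (real n)" by real_asymp
  moreover have "\<forall>\<^sub>F n in sequentially. 768 * ln (real n) ^ 2 \<le> r * real n" using r by real_asymp
  ultimately show ?thesis
  proof eventually_elim
    case (elim n)
    define L where "L = ln (real n)"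
    define Ks where "Ks = {k. k < n \<and> K * L \<le> real k}"
    have n: "16 \<le> n" "1 \<le> L" "2 * r \<le> L" "768 * L ^ 2 \<le> r * real n"
      using elim unfolding L_def by auto
    have "L \<le> real n * L" using mult_right_mono[of 1 "real n" L] n by simp
    then have "r \<le> real n * L" using n r by linarith
    then have p: "0 \<le> (1 - e) / real n" "(1 - e) / real n \<le> 1" "0 \<le> r / (real n * L)" "r / (real n * L) \<le> 1"
      using e r n by (auto simp: field_simps)
    have "measure_pmf.prob (random_hypergraph n ((1 - e) / real n) (r / (real n * L)))
        {H. \<exists>v<n. K * L \<le> real (card (prop_component n H v)) \<and> card (prop_component n H v) \<le> n - 1}
      \<le> (\<Sum>k\<in>Ks. component_bound n ((1 - e) / real n) (r / (real n * L)) k)"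
      unfolding Ks_def by (rule prob_component_size_between_le[OF p])
    also have "\<dots> \<le> (\<Sum>k\<in>Ks. 1 / real n ^ 2)"
      using component_bound_le_inverse_square[OF e r K n(1) _ _ _ _ _, folded L_def] n
      by (intro sum_mono) (auto simp: Ks_def)
    also have "\<dots> = real (card Ks) * (1 / real n ^ 2)"
      by simp
    also have "\<dots> \<le> real n * (1 / real n ^ 2)"
      using card_mono[of "{..<n}" Ks] by (intro mult_right_mono) (auto simp: Ks_def)
    also have "\<dots> = 1 / real n"
      using n by (simp add: power2_eq_square)
    finally show ?case unfolding L_def .
  qed
qed

lemma prob_large_proper_component_tendsto_0:
  fixes e r K :: real
  assumes "0 < e" "e < 1" "0 < r" "1 \<le> K" "2 * (9 + e) / r \<le> K"
  shows "(\<lambda>n. measure_pmf.prob (random_hypergraph n ((1 - e) / real n) (r / (real n * ln (real n))))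
      {H. \<exists>v<n. K * ln (real n) \<le> real (card (prop_component n H v)) \<and> card (prop_component n H v) \<le> n - 1})
    \<longlonglongrightarrow> 0"
  by (rule tendsto_sandwich[of "\<lambda>_. 0", OF _ eventually_prob_large_proper_component_le[OF assms]
        _ lim_const_over_n]) simp_all

theorem lemma3:
  fixes \<epsilon> r :: real
  assumes "0 < \<epsilon>" and "\<epsilon> < 1" and "0 < r"
  defines "K0 \<equiv> max 1 (2 * (9 + \<epsilon>) / r)"
  shows "(\<lambda>n::nat. measure_pmf.prob
            (random_hypergraph n ((1 - \<epsilon>) / real n) (r / (real n * ln (real n))))
            {H. \<not> (\<exists>v<n. K0 * ln (real n) \<le> real (card (prop_component n H v)) \<and>
                         card (prop_component n H v) \<le> n - 1)})
         \<longlonglongrightarrow> 1"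
proof -
  have "1 \<le> K0" "2 * (9 + \<epsilon>) / r \<le> K0" unfolding K0_def by auto
  note bad_to_0 = prob_large_proper_component_tendsto_0[OF assms(1-3) this]
  have compl: "measure_pmf.prob M {H. \<not> P H} = 1 - measure_pmf.prob M {H. P H}"
    for M :: "(nat set set \<times> nat set set) pmf" and P
    using measure_pmf.prob_compl[of "{H. P H}" M] by (simp add: Compl_eq_Diff_UNIV[symmetric] Collect_neg_eq)
  show ?thesis
    unfolding compl using tendsto_diff[OF tendsto_const[of 1] bad_to_0] by simp
qed

end
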